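(* Let $\mathcal{G}$ be a Grothendieck category, $X\in\mathcal{G}$, $\sigma$ an ordinal, $(X_\alpha\mid\alpha\le\sigma)$ a chain of subobjects of $X$ with $X_0=0$, $X_\sigma=X$, $X_\mu=\bigcup_{\alpha<\mu}X_\alpha$ for limit $\mu\le\sigma$, and let $(A_\alpha\mid\alpha<\sigma)$ be subobjects of $X$ with $X_{\alpha+1}=X_\alpha+A_\alpha$ for all $\alpha<\sigma$. If $S\subseteq\sigma$ is closed, then $\ell(S)\cap X_\alpha=\ell(S\cap\alpha)$ for every $\alpha<\sigma$.
   Context: For $S\subseteq\sigma$ (with $\sigma$ identified with the set of ordinals $<\sigma$), $\ell(S)=\sum_{\alpha\in S}A_\alpha\in\mathrm{Subobj}(X)$. A subset $S\subseteq\sigma$ is called closed if every $\alpha\in S$ satisfies $X_\alpha\cap A_\alpha\subseteq\sum_{\gamma\in S,\,\gamma<\alpha}A_\gamma$. Sums, intersections and direct unions are taken in the lattice $\mathrm{Subobj}(X)$ of subobjects of $X$. *)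

theory Defs
  imports Main
begin

text \<open>The lattice Subobj(X) of subobjects of an object X of a Grothendieck category is
  abstracted as a complete lattice (top = X, bot = 0, sup = sum, inf = intersection,
  Sup = sum of a family) which is modular and upper continuous (AB5: intersection
  commutes with direct unions).\<close>

definition modular_lattice :: "'a::complete_lattice itself \<Rightarrow> bool" where
  "modular_lattice _ \<longleftrightarrow>
     (\<forall>x y z :: 'a. x \<le> z \<longrightarrow> sup x (inf y z) = inf (sup x y) z)"

definition directed_set :: "'a::complete_lattice set \<Rightarrow> bool" where
  "directed_set D \<longleftrightarrow> D \<noteq> {} \<and> (\<forall>x\<in>D. \<forall>y\<in>D. \<exists>z\<in>D. x \<le> z \<and> y \<le> z)"

definition upper_continuous :: "'a::complete_lattice itself \<Rightarrow> bool" where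
  "upper_continuous _ \<longleftrightarrow>
     (\<forall>(a::'a) D. directed_set D \<longrightarrow> inf a (Sup D) = (SUP d\<in>D. inf a d))"

text \<open>Ordinals \<open>\<le> \<sigma>\<close> are modelled as the initial segment \<open>{..\<sigma>}\<close> of a well-ordered type.\<close>

definition succ_idx :: "'i::wellorder \<Rightarrow> 'i" where
  "succ_idx \<alpha> = (LEAST \<beta>. \<alpha> < \<beta>)"

definition is_limit_idx :: "'i::wellorder \<Rightarrow> bool" where
  "is_limit_idx \<mu> \<longleftrightarrow> (\<exists>\<beta>. \<beta> < \<mu>) \<and> (\<forall>\<beta><\<mu>. \<exists>\<gamma>. \<beta> < \<gamma> \<and> \<gamma> < \<mu>)"

definition ell :: "('i \<Rightarrow> 'a::complete_lattice) \<Rightarrow> 'i set \<Rightarrow> 'a" where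
  "ell A S = (SUP \<alpha>\<in>S. A \<alpha>)"

definition closed_idx ::
  "('i::wellorder \<Rightarrow> 'a::complete_lattice) \<Rightarrow> ('i \<Rightarrow> 'a) \<Rightarrow> 'i \<Rightarrow> 'i set \<Rightarrow> bool" where
  "closed_idx X A \<sigma> S \<longleftrightarrow> S \<subseteq> {..<\<sigma>} \<and>
     (\<forall>\<alpha>\<in>S. inf (X \<alpha>) (A \<alpha>) \<le> (SUP \<gamma>\<in>{\<gamma>\<in>S. \<gamma> < \<alpha>}. A \<gamma>))"

end

theory Submission
  imports Defs
begin

(* Write L(beta) = ell A (S \<inter> {..<beta}).  The inclusion
   L(alpha) \<le> ell A S \<sqinter> X alpha is immediate, since every A delta with delta < alpha
   lies in X (succ delta) \<le> X alpha.  For the converse we show, by well-founded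
   induction on beta \<le> sigma, that L(beta) \<sqinter> X alpha \<le> L(alpha) for all alpha \<le> beta;
   for beta = sigma this is the claim because S \<subseteq> {..<sigma}.
   - If beta has a largest predecessor gamma, then L(beta) = ell A (S \<inter> {..gamma}), and
     closedness of S together with modularity gives
     ell A (S \<inter> {..gamma}) \<sqinter> X gamma = L(gamma); combine with the hypothesis for gamma.
   - Otherwise L(beta) is the directed union of the L(delta), alpha \<le> delta < beta, and
     upper continuity (AB5) reduces the claim to the hypotheses for these delta. *)

lemma modular_absorb:
  fixes a b z :: "'a::complete_lattice"
  assumes "modular_lattice TYPE('a)" and "b \<le> z" and "inf a z \<le> b"
  shows "inf (sup b a) z = b"
proof -
  have "inf (sup b a) z = sup b (inf a z)"
    using assms(1,2) unfolding modular_lattice_def by metis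
  also have "\<dots> = b" using assms(3) by (rule sup_absorb1)
  finally show ?thesis .
qed

lemma upper_continuous_mono_chain:
  fixes f :: "'i::linorder \<Rightarrow> 'a::complete_lattice"
  assumes "upper_continuous TYPE('a)" and "I \<noteq> {}"
    and mono: "\<And>i j. i \<in> I \<Longrightarrow> j \<in> I \<Longrightarrow> i \<le> j \<Longrightarrow> f i \<le> f j"
  shows "inf a (SUP i\<in>I. f i) = (SUP i\<in>I. inf a (f i))"
proof -
  have "directed_set (f ` I)"
    unfolding directed_set_def
  proof (intro conjI ballI)
    fix x y assume "x \<in> f ` I" "y \<in> f ` I"
    then obtain i j where "i \<in> I" "j \<in> I" "x = f i" "y = f j" by blast
    then show "\<exists>z\<in>f ` I. x \<le> z \<and> y \<le> z"
      using mono by (intro bexI[of _ "f (max i j)"]) (auto simp: max_def)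
  qed (use \<open>I \<noteq> {}\<close> in simp)
  then show ?thesis
    using assms(1) unfolding upper_continuous_def by (simp add: image_image)
qed

lemma interval_top_cases [case_names equal succ limit]:
  fixes \<alpha> \<beta> :: "'i::linorder"
  assumes "\<alpha> \<le> \<beta>"
  obtains "\<alpha> = \<beta>"
    | \<gamma> where "\<alpha> \<le> \<gamma>" "\<gamma> < \<beta>" "\<And>\<delta>. \<delta> < \<beta> \<Longrightarrow> \<delta> \<le> \<gamma>"
    | "\<alpha> < \<beta>" "\<And>\<gamma>. \<gamma> < \<beta> \<Longrightarrow> \<exists>\<gamma>'. \<gamma> < \<gamma>' \<and> \<gamma>' < \<beta>"
proof (cases "\<alpha> = \<beta>")
  case False
  with assms have "\<alpha> < \<beta>" by simp
  show thesis
  proof (cases "\<exists>\<gamma><\<beta>. \<forall>\<delta><\<beta>. \<delta> \<le> \<gamma>")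
    case True
    then obtain \<gamma> where "\<gamma> < \<beta>" "\<And>\<delta>. \<delta> < \<beta> \<Longrightarrow> \<delta> \<le> \<gamma>" by blast
    with \<open>\<alpha> < \<beta>\<close> show thesis using that(2) by blast
  next
    case False
    then show thesis using that(3) \<open>\<alpha> < \<beta>\<close> by (meson not_le)
  qed
qed

lemma ell_mono: "S \<subseteq> T \<Longrightarrow> ell A S \<le> ell A T"
  unfolding ell_def by (rule SUP_subset_mono) auto

lemma ell_insert: "ell A (insert \<gamma> S) = sup (ell A S) (A \<gamma>)"
  unfolding ell_def by (simp add: sup_commute)

lemma ell_prefix_limit:
  fixes \<alpha> \<beta> :: "'i::linorder"
  assumes "\<alpha> < \<beta>" and no_max: "\<And>\<gamma>. \<gamma> < \<beta> \<Longrightarrow> \<exists>\<gamma>'. \<gamma> < \<gamma>' \<and> \<gamma>' < \<beta>"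
  shows "ell A (S \<inter> {..<\<beta>}) = (SUP \<delta>\<in>{\<alpha>..<\<beta>}. ell A (S \<inter> {..<\<delta>}))"
proof (rule antisym)
  show "ell A (S \<inter> {..<\<beta>}) \<le> (SUP \<delta>\<in>{\<alpha>..<\<beta>}. ell A (S \<inter> {..<\<delta>}))"
    unfolding ell_def [of A "S \<inter> {..<\<beta>}"]
  proof (rule SUP_least)
    fix \<gamma> assume \<gamma>: "\<gamma> \<in> S \<inter> {..<\<beta>}"
    then obtain \<gamma>' where "\<gamma> < \<gamma>'" "\<gamma>' < \<beta>" using no_max by blast
    then have "\<gamma> \<in> S \<inter> {..<max \<alpha> \<gamma>'}" and "max \<alpha> \<gamma>' \<in> {\<alpha>..<\<beta>}"
      using \<gamma> assms(1) by (auto simp: less_max_iff_disj)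
    from \<open>\<gamma> \<in> S \<inter> {..<max \<alpha> \<gamma>'}\<close> have "A \<gamma> \<le> ell A (S \<inter> {..<max \<alpha> \<gamma>'})"
      unfolding ell_def by (rule SUP_upper)
    also have "\<dots> \<le> (SUP \<delta>\<in>{\<alpha>..<\<beta>}. ell A (S \<inter> {..<\<delta>}))"
      using \<open>max \<alpha> \<gamma>' \<in> {\<alpha>..<\<beta>}\<close> by (rule SUP_upper)
    finally show "A \<gamma> \<le> \<dots>" .
  qed
  show "(SUP \<delta>\<in>{\<alpha>..<\<beta>}. ell A (S \<inter> {..<\<delta>})) \<le> ell A (S \<inter> {..<\<beta>})"
    by (rule SUP_least) (auto intro: ell_mono)
qed

locale closed_filtration =
  fixes X A :: "'i::wellorder \<Rightarrow> 'a::complete_lattice" and \<sigma> :: 'i and S :: "'i set"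
  assumes modular: "modular_lattice TYPE('a)"
    and ab5: "upper_continuous TYPE('a)"
    and chain: "\<And>\<alpha> \<beta>. \<alpha> \<le> \<beta> \<Longrightarrow> \<beta> \<le> \<sigma> \<Longrightarrow> X \<alpha> \<le> X \<beta>"
    and succ: "\<And>\<alpha>. \<alpha> < \<sigma> \<Longrightarrow> X (succ_idx \<alpha>) = sup (X \<alpha>) (A \<alpha>)"
    and closed: "closed_idx X A \<sigma> S"
begin

lemma S_below_\<sigma>: "S \<subseteq> {..<\<sigma>}"
  using closed unfolding closed_idx_def by blast

lemma closed_at:
  assumes "\<gamma> \<in> S" shows "inf (A \<gamma>) (X \<gamma>) \<le> ell A (S \<inter> {..<\<gamma>})"
proof -
  have "{\<delta>\<in>S. \<delta> < \<gamma>} = S \<inter> {..<\<gamma>}" by auto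
  moreover have "inf (X \<gamma>) (A \<gamma>) \<le> (SUP \<delta>\<in>{\<delta>\<in>S. \<delta> < \<gamma>}. A \<delta>)"
    using closed assms unfolding closed_idx_def by blast
  ultimately show ?thesis unfolding ell_def by (simp add: inf_commute)
qed

lemma A_below_X: assumes "\<delta> < \<gamma>" and "\<gamma> \<le> \<sigma>" shows "A \<delta> \<le> X \<gamma>"
proof -
  have "succ_idx \<delta> \<le> \<gamma>" unfolding succ_idx_def by (rule Least_le) (rule assms(1))
  have "A \<delta> \<le> X (succ_idx \<delta>)" using succ[of \<delta>] assms by auto
  also have "\<dots> \<le> X \<gamma>" using chain \<open>succ_idx \<delta> \<le> \<gamma>\<close> assms(2) by blast
  finally show ?thesis .
qed

lemma ell_prefix_below_X: "\<gamma> \<le> \<sigma> \<Longrightarrow> ell A (S \<inter> {..<\<gamma>}) \<le> X \<gamma>"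
  unfolding ell_def using A_below_X by (auto intro!: SUP_least)

lemma ell_upto_inf_X:
  assumes "\<gamma> \<le> \<sigma>"
  shows "inf (ell A (S \<inter> {..\<gamma>})) (X \<gamma>) = ell A (S \<inter> {..<\<gamma>})"
proof (cases "\<gamma> \<in> S")
  case True
  then have "S \<inter> {..\<gamma>} = insert \<gamma> (S \<inter> {..<\<gamma>})" by auto
  then show ?thesis
    using modular_absorb[OF modular ell_prefix_below_X[OF assms] closed_at[OF True]]
    by (simp add: ell_insert)
next
  case False
  then have "S \<inter> {..\<gamma>} = S \<inter> {..<\<gamma>}" by (auto simp: le_less)
  then show ?thesis using ell_prefix_below_X[OF assms] by (simp add: inf_absorb1)
qed

lemma ell_prefix_inf_X:
  "\<beta> \<le> \<sigma> \<Longrightarrow> \<alpha> \<le> \<beta> \<Longrightarrow> inf (ell A (S \<inter> {..<\<beta>})) (X \<alpha>) \<le> ell A (S \<inter> {..<\<alpha>})"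
proof (induction \<beta> arbitrary: \<alpha> rule: less_induct)
  case (less \<beta>)
  from less.prems(2) show ?case
  proof (cases rule: interval_top_cases)
    case equal
    then show ?thesis by (simp add: inf.coboundedI1)
  next
    case (succ \<gamma>)
    have "\<gamma> \<le> \<sigma>" using succ(2) less.prems(1) by simp
    have "S \<inter> {..<\<beta>} = S \<inter> {..\<gamma>}"
      using succ(3) le_less_trans[OF _ succ(2)] by auto
    moreover have "inf (X \<gamma>) (X \<alpha>) = X \<alpha>"
      using chain[OF succ(1) \<open>\<gamma> \<le> \<sigma>\<close>] by (rule inf_absorb2)
    ultimately have "inf (ell A (S \<inter> {..<\<beta>})) (X \<alpha>)
               = inf (inf (ell A (S \<inter> {..\<gamma>})) (X \<gamma>)) (X \<alpha>)"
      by (simp add: inf_assoc)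
    also have "\<dots> = inf (ell A (S \<inter> {..<\<gamma>})) (X \<alpha>)"
      using \<open>\<gamma> \<le> \<sigma>\<close> by (simp add: ell_upto_inf_X)
    also have "\<dots> \<le> ell A (S \<inter> {..<\<alpha>})"
      using less.IH[OF succ(2) \<open>\<gamma> \<le> \<sigma>\<close> succ(1)] .
    finally show ?thesis .
  next
    case limit
    have "inf (ell A (S \<inter> {..<\<beta>})) (X \<alpha>)
          = inf (X \<alpha>) (SUP \<delta>\<in>{\<alpha>..<\<beta>}. ell A (S \<inter> {..<\<delta>}))"
      using ell_prefix_limit[OF limit(1), of A S] limit(2) by (simp add: inf_commute)
    also have "\<dots> = (SUP \<delta>\<in>{\<alpha>..<\<beta>}. inf (X \<alpha>) (ell A (S \<inter> {..<\<delta>})))"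
      using limit(1) by (intro upper_continuous_mono_chain[OF ab5]) (auto intro: ell_mono)
    also have "\<dots> \<le> ell A (S \<inter> {..<\<alpha>})"
    proof (rule SUP_least)
      fix \<delta> assume "\<delta> \<in> {\<alpha>..<\<beta>}"
      then have "\<alpha> \<le> \<delta>" "\<delta> < \<beta>" by simp_all
      moreover have "\<delta> \<le> \<sigma>"
        using \<open>\<delta> < \<beta>\<close> less.prems(1) by (simp add: less_imp_le order.strict_trans1)
      ultimately show "inf (X \<alpha>) (ell A (S \<inter> {..<\<delta>})) \<le> ell A (S \<inter> {..<\<alpha>})"
        using less.IH[of \<delta> \<alpha>] by (simp add: inf_commute)
    qed
    finally show ?thesis .
  qed
qed

end

theorem lemma2p3:
  fixes X A :: "'i::wellorder \<Rightarrow> 'a::complete_lattice"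
    and \<sigma> :: 'i and S :: "'i set"
  assumes modular: "modular_lattice TYPE('a)"
    and ab5: "upper_continuous TYPE('a)"
    and chain: "\<And>\<alpha> \<beta>. \<alpha> \<le> \<beta> \<Longrightarrow> \<beta> \<le> \<sigma> \<Longrightarrow> X \<alpha> \<le> X \<beta>"
    and zero: "\<And>\<alpha>. \<not> (\<exists>\<beta>. \<beta> < \<alpha>) \<Longrightarrow> X \<alpha> = bot"
    and top: "X \<sigma> = top"
    and limit: "\<And>\<mu>. \<mu> \<le> \<sigma> \<Longrightarrow> is_limit_idx \<mu> \<Longrightarrow> X \<mu> = (SUP \<alpha>\<in>{..<\<mu>}. X \<alpha>)"
    and succ: "\<And>\<alpha>. \<alpha> < \<sigma> \<Longrightarrow> X (succ_idx \<alpha>) = sup (X \<alpha>) (A \<alpha>)"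
    and closed: "closed_idx X A \<sigma> S"
  shows "\<forall>\<alpha><\<sigma>. inf (ell A S) (X \<alpha>) = ell A (S \<inter> {..<\<alpha>})"
proof (intro allI impI antisym)
  interpret closed_filtration X A \<sigma> S
    using modular ab5 chain succ closed by unfold_locales
  fix \<alpha> assume "\<alpha> < \<sigma>"
  have "S \<inter> {..<\<sigma>} = S" using S_below_\<sigma> by blast
  then show "inf (ell A S) (X \<alpha>) \<le> ell A (S \<inter> {..<\<alpha>})"
    using ell_prefix_inf_X[of \<sigma> \<alpha>] \<open>\<alpha> < \<sigma>\<close> by simp
  show "ell A (S \<inter> {..<\<alpha>}) \<le> inf (ell A S) (X \<alpha>)"
    using ell_prefix_below_X[of \<alpha>] ell_mono[of "S \<inter> {..<\<alpha>}" S A] \<open>\<alpha> < \<sigma>\<close> by simp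
qed

end
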